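(* Consider the following $N$-atom clock estimation problem. Let $Q$ be the $(N+1)$-dimensional Hilbert space with orthonormal basis $|0\rangle,\dots,|N\rangle$, let $J_z|k\rangle=(k-N/2)|k\rangle$, and for $\omega\in\mathbb{R}$ let $\Omega(\omega)=e^{-iJ_z\omega}$. A $t_f$-query algorithm $\mathcal{Q}$ consists of a finite-dimensional ancilla system $A$, an initial state $\rho(0)$ on $Q\otimes A$, unitaries $U(1),\dots,U(t_f)$ on $Q\otimes A$, a POVM $\{P_a\}_a$ on $Q\otimes A$ with finitely many outcomes, and a real frequency estimate $f_a$ assigned to each outcome $a$. Given $\omega$, the final state is $\rho_\omega(t_f)=\Omega(\omega)U(t_f)\cdots\Omega(\omega)U(1)\,\rho(0)\,U(1)^\dagger\Omega(\omega)^\dagger\cdots U(t_f)^\dagger\Omega(\omega)^\dagger$ (with $\Omega(\omega)$ acting on $Q$ only), and $q(a|\omega,\mathcal{Q})=\mathrm{tr}(P_a\rho_\omega(t_f))$. For a probability density $p$ on $\mathbb{R}$ (the prior) and a cost function $C:\mathbb{R}\to\mathbb{R}$, the expected cost of $\mathcal{Q}$ is $\sum_a\int C(\omega-f_a)\,q(a|\omega,\mathcal{Q})\,p(\omega)\,d\omega$, and for a set $F\subseteq\mathbb{R}$, $S_C(p,F)$ denotes the infimum of the expected cost over all $t_f$-query algorithms whose estimates $f_a$ all lie in $F$. Let $C$ be twice differentiable and non-negative with $C''(x)\leq b$ for all $x$, $C(0)=0$, and $C$ monotone on $[0,\infty)$ and on $(-\infty,0]$. Let $F=\{f_1,\dots,f_n\}$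 with $f_1<f_2<\dots<f_n$, and define $M(\omega)=C(\omega-f_1)$ for $\omega\leq f_1$, $M(\omega)=C(\omega-f_n)$ for $\omega\geq f_n$, and $M(\omega)=0$ otherwise. Then $$S_C(p,F)-S_C(p,\mathbb{R})\leq \max_j \frac{b}{8}(f_{j+1}-f_j)^2+\int M(\omega)p(\omega)\,d\omega.$$ *)

theory Defs
  imports "HOL-Analysis.Analysis"
begin

text \<open>A D x D complex matrix is represented as a function nat => nat => complex;
  only entries with both indices below D are relevant.\<close>

type_synonym cmat = "nat \<Rightarrow> nat \<Rightarrow> complex"

definition mmul :: "nat \<Rightarrow> cmat \<Rightarrow> cmat \<Rightarrow> cmat" where
  "mmul D A B = (\<lambda>i j. \<Sum>k<D. A i k * B k j)"

definition adj :: "cmat \<Rightarrow> cmat" where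
  "adj A = (\<lambda>i j. cnj (A j i))"

definition idm :: cmat where
  "idm = (\<lambda>i j. if i = j then 1 else 0)"

definition mtrace :: "nat \<Rightarrow> cmat \<Rightarrow> complex" where
  "mtrace D A = (\<Sum>i<D. A i i)"

definition mat_eq :: "nat \<Rightarrow> cmat \<Rightarrow> cmat \<Rightarrow> bool" where
  "mat_eq D A B \<longleftrightarrow> (\<forall>i<D. \<forall>j<D. A i j = B i j)"

definition unitary_mat :: "nat \<Rightarrow> cmat \<Rightarrow> bool" where
  "unitary_mat D U \<longleftrightarrow> mat_eq D (mmul D U (adj U)) idm \<and> mat_eq D (mmul D (adj U) U) idm"

definition psd :: "nat \<Rightarrow> cmat \<Rightarrow> bool" where
  "psd D A \<longleftrightarrow> (\<forall>v :: nat \<Rightarrow> complex.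
     let z = (\<Sum>i<D. \<Sum>j<D. cnj (v i) * A i j * v j) in Im z = 0 \<and> Re z \<ge> 0)"

definition density_mat :: "nat \<Rightarrow> cmat \<Rightarrow> bool" where
  "density_mat D \<rho> \<longleftrightarrow> psd D \<rho> \<and> mtrace D \<rho> = 1"

definition povm :: "nat \<Rightarrow> nat \<Rightarrow> (nat \<Rightarrow> cmat) \<Rightarrow> bool" where
  "povm D m P \<longleftrightarrow> (\<forall>a<m. psd D (P a)) \<and> mat_eq D (\<lambda>i j. \<Sum>a<m. P a i j) idm"

text \<open>The space Q (x) A with dim Q = N+1 (basis |0>..|N>) and dim A = d is identified
  with C^((N+1) d) via |k> (x) |r>  \<mapsto>  index k*d + r.  The operator
  Omega(omega) (x) I_A, with Omega(omega) = exp(-i J_z omega), J_z|k> = (k - N/2)|k>,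
  is diagonal with entry exp(-i (k - N/2) omega) at index k*d + r.\<close>

definition Omega_full :: "nat \<Rightarrow> nat \<Rightarrow> real \<Rightarrow> cmat" where
  "Omega_full N d \<omega> = (\<lambda>i j. if i = j
      then exp (- \<i> * complex_of_real ((real (i div d) - real N / 2) * \<omega>)) else 0)"

record qalg =
  anc_dim :: nat
  init_state :: cmat
  unitaries :: "cmat list"
  n_outcomes :: nat
  povm_el :: "nat \<Rightarrow> cmat"
  estimate :: "nat \<Rightarrow> real"

definition alg_dim :: "nat \<Rightarrow> qalg \<Rightarrow> nat" where
  "alg_dim N Q = (N + 1) * anc_dim Q"

definition valid_alg :: "nat \<Rightarrow> nat \<Rightarrow> real set \<Rightarrow> qalg \<Rightarrow> bool" where
  "valid_alg N tf F Q \<longleftrightarrow>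
     anc_dim Q \<ge> 1 \<and>
     density_mat (alg_dim N Q) (init_state Q) \<and>
     length (unitaries Q) = tf \<and>
     (\<forall>U \<in> set (unitaries Q). unitary_mat (alg_dim N Q) U) \<and>
     povm (alg_dim N Q) (n_outcomes Q) (povm_el Q) \<and>
     (\<forall>a < n_outcomes Q. estimate Q a \<in> F)"

definition final_state :: "nat \<Rightarrow> qalg \<Rightarrow> real \<Rightarrow> cmat" where
  "final_state N Q \<omega> =
     (let D = alg_dim N Q; Om = Omega_full N (anc_dim Q) \<omega> in
      foldl (\<lambda>\<rho> U. let W = mmul D Om U in mmul D (mmul D W \<rho>) (adj W))
            (init_state Q) (unitaries Q))"

text \<open>q(a | omega, Q) = tr(P_a rho_omega(t_f)) (a real number for valid algorithms).\<close>
definition outcome_prob :: "nat \<Rightarrow> qalg \<Rightarrow> nat \<Rightarrow> real \<Rightarrow> real" where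
  "outcome_prob N Q a \<omega> = Re (mtrace (alg_dim N Q) (mmul (alg_dim N Q) (povm_el Q a) (final_state N Q \<omega>)))"

text \<open>Expected cost (integrand is non-negative, so the non-negative Lebesgue integral is used).\<close>
definition expected_cost :: "nat \<Rightarrow> (real \<Rightarrow> real) \<Rightarrow> (real \<Rightarrow> real) \<Rightarrow> qalg \<Rightarrow> ennreal" where
  "expected_cost N C p Q =
     (\<Sum>a < n_outcomes Q. \<integral>\<^sup>+ \<omega>. ennreal (C (\<omega> - estimate Q a) * outcome_prob N Q a \<omega> * p \<omega>) \<partial>lborel)"

definition S_C :: "nat \<Rightarrow> nat \<Rightarrow> (real \<Rightarrow> real) \<Rightarrow> (real \<Rightarrow> real) \<Rightarrow> real set \<Rightarrow> ennreal" where
  "S_C N tf C p F = (INF Q \<in> {Q. valid_alg N tf F Q}. expected_cost N C p Q)"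

definition prob_density :: "(real \<Rightarrow> real) \<Rightarrow> bool" where
  "prob_density p \<longleftrightarrow> p \<in> borel_measurable borel \<and> (\<forall>x. p x \<ge> 0) \<and>
     (\<integral>\<^sup>+ x. ennreal (p x) \<partial>lborel) = 1"

end

theory Submission
  imports Defs
begin

text \<open>
  Given any algorithm, round each of its estimates f at random to the grid: if
  f_j \<le> f \<le> f_(j+1), report f_j with probability l = (f_(j+1) - f) / (f_(j+1) - f_j) and
  f_(j+1) otherwise, which amounts to splitting the POVM element P_a into l P_a and (1 - l) P_a.
  Expanding C to second order around \<omega> - f, the first-order terms cancel because
  l f_j + (1 - l) f_(j+1) = f, and the second-order term is at most
  b/2 (f - f_j) (f_(j+1) - f) \<le> b/8 (f_(j+1) - f_j)^2.  Estimates outside [f_1, f_n] are moved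
  to the nearest endpoint; as C grows away from 0, this costs at most M(\<omega>).  The pointwise
  bounds can be summed over the outcomes because the outcome probabilities tr(P_a \<rho>) are
  non-negative and add up to 1.
\<close>

section \<open>Positive semidefinite matrices\<close>

definition sesq :: "nat \<Rightarrow> cmat \<Rightarrow> (nat \<Rightarrow> complex) \<Rightarrow> (nat \<Rightarrow> complex) \<Rightarrow> complex" where
  "sesq D A u v = (\<Sum>i<D. \<Sum>j<D. cnj (u i) * A i j * v j)"

definition unit_vec :: "nat \<Rightarrow> nat \<Rightarrow> complex" where
  "unit_vec k = (\<lambda>i. if i = k then 1 else 0)"

lemma psd_iff_sesq: "psd D A \<longleftrightarrow> (\<forall>v. Im (sesq D A v v) = 0 \<and> Re (sesq D A v v) \<ge> 0)"
  by (simp add: psd_def sesq_def Let_def)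

lemma sesq_add_left: "sesq D A (\<lambda>i. u i + w i) v = sesq D A u v + sesq D A w v"
  by (simp add: sesq_def distrib_left distrib_right sum.distrib)

lemma sesq_add_right: "sesq D A u (\<lambda>i. v i + w i) = sesq D A u v + sesq D A u w"
  by (simp add: sesq_def distrib_left distrib_right sum.distrib)

lemma sesq_scale_left: "sesq D A (\<lambda>i. c * u i) v = cnj c * sesq D A u v"
  by (simp add: sesq_def sum_distrib_left mult_ac)

lemma sesq_scale_right: "sesq D A u (\<lambda>i. c * v i) = c * sesq D A u v"
  by (simp add: sesq_def sum_distrib_left mult_ac)

lemma sesq_unit_vec_left: "i < D \<Longrightarrow> sesq D A (unit_vec i) v = (\<Sum>j<D. A i j * v j)"
  unfolding sesq_def unit_vec_def by (simp add: if_distrib if_distribR sum.If_cases cong: if_cong)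

lemma sesq_unit_vec_right: "j < D \<Longrightarrow> sesq D A u (unit_vec j) = (\<Sum>i<D. cnj (u i) * A i j)"
  unfolding sesq_def unit_vec_def sum_distrib_left by (simp add: if_distrib if_distribR sum.If_cases cong: if_cong)

lemma sesq_unit_vec: "i < D \<Longrightarrow> j < D \<Longrightarrow> sesq D A (unit_vec i) (unit_vec j) = A i j"
  by (simp add: sesq_unit_vec_left) (simp add: unit_vec_def if_distrib if_distribR cong: if_cong)

lemmas sesq_linear =
  sesq_add_left sesq_add_right sesq_scale_left sesq_scale_right sesq_unit_vec

lemma psd_diag:
  assumes "psd D A" "i < D"
  shows "Im (A i i) = 0" "Re (A i i) \<ge> 0"
  using assms sesq_unit_vec[of i D i A] unfolding psd_iff_sesq by metis+

lemma psd_hermitian: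
  assumes "psd D A" "i < D" "j < D"
  shows "A j i = cnj (A i j)"
proof -
  let ?u = "\<lambda>k. unit_vec i k + unit_vec j k" and ?v = "\<lambda>k. unit_vec i k + \<i> * unit_vec j k"
  have "sesq D A ?u ?u = A i i + A i j + A j i + A j j"
    by (simp add: sesq_linear assms)
  moreover have "sesq D A ?v ?v = A i i + \<i> * A i j - \<i> * A j i + A j j"
    by (simp add: sesq_linear assms algebra_simps)
  moreover have "Im (sesq D A ?u ?u) = 0" "Im (sesq D A ?v ?v) = 0"
    using assms(1) unfolding psd_iff_sesq by blast+
  ultimately show ?thesis
    using psd_diag[OF assms(1,2)] psd_diag[OF assms(1,3)] by (simp add: complex_eq_iff)
qed

lemma psd_restrict:
  assumes "psd (Suc n) A"
  shows "psd n A"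
proof -
  have "sesq (Suc n) A (\<lambda>k. if k < n then v k else 0) (\<lambda>k. if k < n then v k else 0) = sesq n A v v"
    for v
    unfolding sesq_def by (simp add: sum.lessThan_Suc)
  with assms show ?thesis
    unfolding psd_iff_sesq by metis
qed

text \<open>Otherwise the quadratic form at x e_n + e_j with x = -t A_nj equals
  Re A_jj - 2 t |A_nj|^2, which is negative for large t.\<close>

lemma psd_zero_diag_row:
  assumes "psd D A" "n < D" "A n n = 0" "j < D"
  shows "A n j = 0"
proof (rule ccontr)
  assume a0: "A n j \<noteq> 0"
  define a where "a = A n j"
  have h: "A j n = cnj a" using psd_hermitian[OF assms(1,2,4)] a_def by simp
  define t where "t = (Re (A j j) + 1) / (2 * (cmod a)^2)"
  define x where "x = - complex_of_real t * a"
  let ?v = "\<lambda>k. x * unit_vec n k + unit_vec j k"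
  have "sesq D A ?v ?v = cnj x * x * A n n + cnj x * a + x * cnj a + A j j"
    by (simp add: sesq_linear assms a_def h algebra_simps)
  moreover have "Re (sesq D A ?v ?v) \<ge> 0"
    using assms(1) unfolding psd_iff_sesq by blast
  moreover have "Re (cnj x * a + x * cnj a) = - 2 * t * (cmod a)^2"
    by (simp add: x_def algebra_simps power2_eq_square cmod_def)
  moreover have "2 * t * (cmod a)^2 = Re (A j j) + 1"
    using a0 a_def by (simp add: t_def)
  ultimately show False using assms(3) by simp
qed

text \<open>One step of a Cholesky decomposition: the quadratic form of A - w w^* at v equals that
  of A at v + t e_n for a suitable t.\<close>

lemma psd_subtract_column:
  assumes psd: "psd (Suc n) A" and r: "A n n = complex_of_real r" and rpos: "r > 0"
  defines "w \<equiv> (\<lambda>i. A i n / complex_of_real (sqrt r))"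
  shows "psd (Suc n) (\<lambda>i j. A i j - w i * cnj (w j))"
  unfolding psd_iff_sesq
proof
  fix v
  let ?D = "Suc n" and ?s = "complex_of_real (sqrt r)"
  have srr: "?s * ?s = complex_of_real r"
    using rpos by (simp flip: of_real_mult)
  have nz: "?s \<noteq> 0" using rpos by simp
  define T where "T = (\<Sum>i<?D. cnj (v i) * w i)"
  define t where "t = - cnj T / ?s"
  have "sesq ?D (\<lambda>i j. A i j - w i * cnj (w j)) v v
      = sesq ?D A v v - (\<Sum>i<?D. \<Sum>j<?D. cnj (v i) * w i * (cnj (w j) * v j))"
    by (simp add: sesq_def algebra_simps sum_subtractf del: sum.lessThan_Suc)
  also have "(\<Sum>i<?D. \<Sum>j<?D. cnj (v i) * w i * (cnj (w j) * v j)) = T * cnj T"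
    unfolding T_def cnj_sum sum_product by (simp add: mult_ac del: sum.lessThan_Suc)
  finally have diff: "sesq ?D (\<lambda>i j. A i j - w i * cnj (w j)) v v = sesq ?D A v v - T * cnj T" .
  have col: "sesq ?D A v (unit_vec n) = ?s * T"
    unfolding T_def w_def sesq_unit_vec_right[OF lessI] sum_distrib_left
    by (rule sum.cong) (use nz in auto)
  have "sesq ?D A (unit_vec n) v = (\<Sum>j<?D. cnj (A j n) * v j)"
    unfolding sesq_unit_vec_left[OF lessI]
    by (rule sum.cong) (simp_all add: psd_hermitian[OF psd, of _ n])
  then have row: "sesq ?D A (unit_vec n) v = ?s * cnj T"
    unfolding T_def w_def cnj_sum sum_distrib_left
    by (simp del: sum.lessThan_Suc) (rule sum.cong, use nz in auto)
  have "sesq ?D A (\<lambda>k. v k + t * unit_vec n k) (\<lambda>k. v k + t * unit_vec n k)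
      = sesq ?D A v v + t * sesq ?D A v (unit_vec n) + cnj t * sesq ?D A (unit_vec n) v
        + cnj t * t * A n n"
    by (simp add: sesq_linear algebra_simps)
  also have "\<dots> = sesq ?D A v v - T * cnj T"
    unfolding col row r t_def using nz srr by (simp add: field_simps)
  finally have "sesq ?D (\<lambda>i j. A i j - w i * cnj (w j)) v v
      = sesq ?D A (\<lambda>k. v k + t * unit_vec n k) (\<lambda>k. v k + t * unit_vec n k)"
    using diff by simp
  then show "Im (sesq ?D (\<lambda>i j. A i j - w i * cnj (w j)) v v) = 0
      \<and> 0 \<le> Re (sesq ?D (\<lambda>i j. A i j - w i * cnj (w j)) v v)"
    using psd unfolding psd_iff_sesq by metis
qed

lemma psd_split_last:
  assumes "psd (Suc n) A"
  obtains w A' where "psd (Suc n) A'" "A' n n = 0" "\<And>i j. A i j = A' i j + w i * cnj (w j)"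
proof -
  define r where "r = Re (A n n)"
  have Ar: "A n n = complex_of_real r" and r0: "r \<ge> 0"
    using psd_diag[OF assms, of n] by (simp_all add: r_def complex_eq_iff)
  show thesis
  proof (cases "r = 0")
    case True
    with assms Ar show thesis by (intro that[of A "\<lambda>_. 0"]) auto
  next
    case False
    with r0 have rpos: "r > 0" by simp
    define w where "w = (\<lambda>i. A i n / complex_of_real (sqrt r))"
    have "w n * cnj (w n) = A n n"
      unfolding w_def Ar using rpos by (simp flip: of_real_mult of_real_divide)
    moreover have "psd (Suc n) (\<lambda>i j. A i j - w i * cnj (w j))"
      unfolding w_def by (rule psd_subtract_column[OF assms Ar rpos])
    ultimately show thesis
      by (intro that[of "\<lambda>i j. A i j - w i * cnj (w j)" w]) auto
  qed
qed

lemma psd_gram_decomposition: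
  "psd D A \<Longrightarrow> \<exists>c. \<forall>i<D. \<forall>j<D. A i j = (\<Sum>k<D. c k i * cnj (c k j))"
proof (induction D arbitrary: A)
  case 0
  then show ?case by simp
next
  case (Suc n)
  obtain w A' where A': "psd (Suc n) A'" "A' n n = 0" "\<And>i j. A i j = A' i j + w i * cnj (w j)"
    using psd_split_last[OF Suc.prems] by metis
  have row: "A' n j = 0" if "j < Suc n" for j
    using psd_zero_diag_row[OF A'(1) _ A'(2) that] by simp
  have col: "A' i n = 0" if "i < Suc n" for i
    using psd_hermitian[OF A'(1) that, of n] row[OF that] by simp
  obtain c where c: "\<forall>i<n. \<forall>j<n. A' i j = (\<Sum>k<n. c k i * cnj (c k j))"
    using Suc.IH[OF psd_restrict[OF A'(1)]] by blast
  define c' where "c' = (\<lambda>k i. if k < n then (if i < n then c k i else 0) else w i)"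
  have "A i j = (\<Sum>k<Suc n. c' k i * cnj (c' k j))" if "i < Suc n" "j < Suc n" for i j
  proof -
    have "(\<Sum>k<n. c' k i * cnj (c' k j)) = A' i j"
    proof (cases "i < n \<and> j < n")
      case True
      with c show ?thesis by (simp add: c'_def)
    next
      case False
      with that have "i = n \<or> j = n" by auto
      with row col that show ?thesis by (auto simp: c'_def)
    qed
    then show ?thesis using A'(3) by (simp add: c'_def)
  qed
  then show ?case by blast
qed

lemma trace_mmul_psd_nonneg:
  assumes P: "psd D P" and R: "psd D R"
  shows "Re (mtrace D (mmul D P R)) \<ge> 0"
proof -
  obtain c where c: "\<forall>i<D. \<forall>j<D. R i j = (\<Sum>k<D. c k i * cnj (c k j))"
    using psd_gram_decomposition[OF R] by blast
  have "mtrace D (mmul D P R) = (\<Sum>i<D. \<Sum>k<D. P i k * (\<Sum>m<D. c m k * cnj (c m i)))"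
    unfolding mtrace_def mmul_def using c by (intro sum.cong refl) auto
  also have "\<dots> = (\<Sum>i<D. \<Sum>k<D. \<Sum>m<D. cnj (c m i) * P i k * c m k)"
    by (simp add: sum_distrib_left mult_ac)
  also have "\<dots> = (\<Sum>m<D. \<Sum>i<D. \<Sum>k<D. cnj (c m i) * P i k * c m k)"
    by (subst sum.swap) (rule sum.swap)
  also have "\<dots> = (\<Sum>m<D. sesq D P (c m) (c m))"
    by (simp add: sesq_def)
  finally have "Re (mtrace D (mmul D P R)) = (\<Sum>m<D. Re (sesq D P (c m) (c m)))"
    by simp
  also have "\<dots> \<ge> 0"
    using P unfolding psd_iff_sesq by (intro sum_nonneg) auto
  finally show ?thesis .
qed

lemma psd_scale: "psd D P \<Longrightarrow> c \<ge> 0 \<Longrightarrow> psd D (\<lambda>i j. complex_of_real c * P i j)"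
proof -
  assume "psd D P" "c \<ge> 0"
  moreover have "sesq D (\<lambda>i j. complex_of_real c * P i j) v v = complex_of_real c * sesq D P v v" for v
    by (simp add: sesq_def sum_distrib_left mult_ac)
  ultimately show ?thesis unfolding psd_iff_sesq by simp
qed

section \<open>Unitary evolution of density matrices\<close>

lemma mmul_assoc: "mmul D (mmul D A B) C = mmul D A (mmul D B C)"
proof -
  have "(\<Sum>k<D. (\<Sum>m<D. A i m * B m k) * C k j) = (\<Sum>m<D. A i m * (\<Sum>k<D. B m k * C k j))" for i j
  proof -
    have "(\<Sum>k<D. (\<Sum>m<D. A i m * B m k) * C k j) = (\<Sum>k<D. \<Sum>m<D. A i m * B m k * C k j)"
      by (simp add: sum_distrib_right)
    also have "\<dots> = (\<Sum>m<D. \<Sum>k<D. A i m * B m k * C k j)"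
      by (rule sum.swap)
    also have "\<dots> = (\<Sum>m<D. A i m * (\<Sum>k<D. B m k * C k j))"
      by (simp add: sum_distrib_left mult_ac)
    finally show ?thesis .
  qed
  then show ?thesis unfolding mmul_def by blast
qed

lemma mtrace_mmul_commute: "mtrace D (mmul D A B) = mtrace D (mmul D B A)"
  unfolding mtrace_def mmul_def by (subst sum.swap) (simp add: mult.commute)

lemma mtrace_mmul_idm:
  assumes "mat_eq D X idm"
  shows "mtrace D (mmul D X R) = mtrace D R"
  unfolding mtrace_def mmul_def
proof (intro sum.cong refl)
  fix i assume "i \<in> {..<D}"
  with assms have "(\<Sum>k<D. X i k * R k i) = (\<Sum>k<D. if i = k then R k i else 0)"
    by (intro sum.cong refl) (auto simp: mat_eq_def idm_def)
  with \<open>i \<in> {..<D}\<close> show "(\<Sum>k<D. X i k * R k i) = R i i" by simp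
qed

lemma mtrace_conj_unitary:
  "mat_eq D (mmul D (adj W) W) idm \<Longrightarrow> mtrace D (mmul D (mmul D W R) (adj W)) = mtrace D R"
  by (metis mmul_assoc mtrace_mmul_commute mtrace_mmul_idm)

lemma sesq_mmul_left: "sesq D (mmul D X Y) u v = sesq D Y (\<lambda>k. \<Sum>i<D. cnj (X i k) * u i) v"
proof -
  have "sesq D (mmul D X Y) u v = (\<Sum>i<D. \<Sum>j<D. \<Sum>k<D. cnj (u i) * X i k * Y k j * v j)"
    by (simp add: sesq_def mmul_def sum_distrib_left sum_distrib_right mult_ac)
  also have "\<dots> = (\<Sum>k<D. \<Sum>j<D. \<Sum>i<D. cnj (u i) * X i k * Y k j * v j)"
    by (subst sum.swap) (subst sum.swap, subst (2) sum.swap, rule refl)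
  also have "\<dots> = sesq D Y (\<lambda>k. \<Sum>i<D. cnj (X i k) * u i) v"
    by (simp add: sesq_def cnj_sum sum_distrib_left sum_distrib_right mult_ac)
  finally show ?thesis .
qed

lemma sesq_mmul_right: "sesq D (mmul D Y X) u v = sesq D Y u (\<lambda>l. \<Sum>j<D. X l j * v j)"
proof -
  have "sesq D (mmul D Y X) u v = (\<Sum>i<D. \<Sum>j<D. \<Sum>l<D. cnj (u i) * Y i l * X l j * v j)"
    by (simp add: sesq_def mmul_def sum_distrib_left sum_distrib_right mult_ac)
  also have "\<dots> = (\<Sum>i<D. \<Sum>l<D. \<Sum>j<D. cnj (u i) * Y i l * X l j * v j)"
    by (rule sum.cong[OF refl], rule sum.swap)
  also have "\<dots> = sesq D Y u (\<lambda>l. \<Sum>j<D. X l j * v j)"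
    by (simp add: sesq_def sum_distrib_left sum_distrib_right mult_ac)
  finally show ?thesis .
qed

lemma psd_conj: "psd D R \<Longrightarrow> psd D (mmul D (mmul D W R) (adj W))"
proof -
  have "sesq D (mmul D (mmul D W R) (adj W)) v v
      = sesq D R (\<lambda>k. \<Sum>i<D. cnj (W i k) * v i) (\<lambda>k. \<Sum>i<D. cnj (W i k) * v i)" for v
    unfolding sesq_mmul_right[of D "mmul D W R"] sesq_mmul_left[of D W R] by (simp add: adj_def)
  then show "psd D R \<Longrightarrow> ?thesis" unfolding psd_iff_sesq by simp
qed

lemma mmul_Omega_full: "i < D \<Longrightarrow> mmul D (Omega_full N d \<omega>) U i l = Omega_full N d \<omega> i i * U i l"
  unfolding mmul_def by (subst sum.remove[of _ i]) (auto simp: Omega_full_def)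

lemma Omega_full_unimodular: "cnj (Omega_full N d \<omega> i i) * Omega_full N d \<omega> i i = 1"
  by (simp add: Omega_full_def exp_cnj flip: exp_add)

lemma Omega_full_mmul_isometry:
  assumes "unitary_mat D U"
  shows "mat_eq D (mmul D (adj (mmul D (Omega_full N d \<omega>) U)) (mmul D (Omega_full N d \<omega>) U)) idm"
proof -
  have "mmul D (adj (mmul D (Omega_full N d \<omega>) U)) (mmul D (Omega_full N d \<omega>) U) l k
      = (\<Sum>i<D. (cnj (Omega_full N d \<omega> i i) * Omega_full N d \<omega> i i) * (cnj (U i l) * U i k))"
    for l k
    unfolding mmul_def[of D "adj (mmul D (Omega_full N d \<omega>) U)"] unfolding adj_def
    by (intro sum.cong refl) (simp add: mmul_Omega_full mult_ac)
  then have "mmul D (adj (mmul D (Omega_full N d \<omega>) U)) (mmul D (Omega_full N d \<omega>) U)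
      = mmul D (adj U) U"
    by (simp add: Omega_full_unimodular mmul_def adj_def)
  with assms show ?thesis unfolding unitary_mat_def by simp
qed

lemma density_mat_foldl_evolution:
  assumes "\<forall>U\<in>set Us. unitary_mat D U" "density_mat D R"
  shows "density_mat D
    (foldl (\<lambda>\<rho> U. let W = mmul D (Omega_full N d \<omega>) U in mmul D (mmul D W \<rho>) (adj W)) R Us)"
  using assms
proof (induction Us arbitrary: R)
  case Nil
  then show ?case by simp
next
  case (Cons U Us)
  let ?W = "mmul D (Omega_full N d \<omega>) U"
  have "density_mat D (mmul D (mmul D ?W R) (adj ?W))"
    using Cons.prems psd_conj mtrace_conj_unitary[OF Omega_full_mmul_isometry]
    unfolding density_mat_def by simp
  with Cons show ?case by (simp add: Let_def)
qed

lemma density_mat_final_state: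
  "valid_alg N tf F Q \<Longrightarrow> density_mat (alg_dim N Q) (final_state N Q \<omega>)"
  unfolding valid_alg_def final_state_def Let_def
  using density_mat_foldl_evolution[unfolded Let_def] by blast

lemma outcome_prob_nonneg:
  assumes "valid_alg N tf F Q" "a < n_outcomes Q"
  shows "outcome_prob N Q a \<omega> \<ge> 0"
  using assms density_mat_final_state[OF assms(1)] trace_mmul_psd_nonneg
  unfolding outcome_prob_def valid_alg_def povm_def density_mat_def by blast

lemma sum_outcome_prob:
  assumes "valid_alg N tf F Q"
  shows "(\<Sum>a<n_outcomes Q. outcome_prob N Q a \<omega>) = 1"
proof -
  let ?D = "alg_dim N Q" and ?R = "final_state N Q \<omega>" and ?P = "povm_el Q"
  have "(\<Sum>a<n_outcomes Q. mtrace ?D (mmul ?D (?P a) ?R))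
      = mtrace ?D (mmul ?D (\<lambda>i j. \<Sum>a<n_outcomes Q. ?P a i j) ?R)"
    unfolding mtrace_def mmul_def sum_distrib_right
    by (subst sum.swap) (subst (2) sum.swap, rule refl)
  also have "\<dots> = 1"
    using assms density_mat_final_state[OF assms] mtrace_mmul_idm
    unfolding valid_alg_def povm_def density_mat_def by metis
  finally show ?thesis
    unfolding outcome_prob_def by (metis Re_sum one_complex.sel(1))
qed

lemma borel_measurable_cnj[measurable]:
  "f \<in> borel_measurable M \<Longrightarrow> (\<lambda>x. cnj (f x :: complex)) \<in> borel_measurable M"
  by (rule measurable_compose[OF _ borel_measurable_continuous_onI]) (auto intro: continuous_intros)

lemma borel_measurable_foldl_evolution:
  assumes "\<And>i j. (\<lambda>\<omega>. R \<omega> i j) \<in> borel_measurable borel"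
  shows "(\<lambda>\<omega>. foldl (\<lambda>\<rho> U. let W = mmul D (Omega_full N d \<omega>) U in mmul D (mmul D W \<rho>) (adj W))
            (R \<omega>) Us i j) \<in> borel_measurable borel"
  using assms
proof (induction Us arbitrary: R)
  case Nil
  then show ?case by simp
next
  case (Cons U Us)
  have "(\<lambda>\<omega>. mmul D (mmul D (mmul D (Omega_full N d \<omega>) U) (R \<omega>)) (adj (mmul D (Omega_full N d \<omega>) U)) i j)
      \<in> borel_measurable borel" for i j
    unfolding mmul_def adj_def Omega_full_def using Cons.prems by measurable
  then show ?case
    using Cons.IH[of "\<lambda>\<omega>. let W = mmul D (Omega_full N d \<omega>) U in mmul D (mmul D W (R \<omega>)) (adj W)"]
    by (simp add: Let_def)
qed

lemma borel_measurable_outcome_prob[measurable]: "outcome_prob N Q a \<in> borel_measurable borel"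
proof -
  have "(\<lambda>\<omega>. final_state N Q \<omega> i j) \<in> borel_measurable borel" for i j
    unfolding final_state_def Let_def
    using borel_measurable_foldl_evolution[of "\<lambda>_. init_state Q"] by (simp add: Let_def)
  then show ?thesis
    unfolding outcome_prob_def mtrace_def mmul_def by measurable
qed

section \<open>Rounding estimates to a grid\<close>

lemma taylor_upper_bound:
  fixes C :: "real \<Rightarrow> real"
  assumes diff1: "\<And>x. C differentiable (at x)"
    and diff2: "\<And>x. deriv C differentiable (at x)"
    and bound: "\<And>x. deriv (deriv C) x \<le> b"
  shows "C y \<le> C u + deriv C u * (y - u) + b / 2 * (y - u)^2"
proof (cases "y = u")
  case True
  then show ?thesis by simp
next
  case False
  define df where "df = (\<lambda>m::nat. if m = 0 then C else if m = 1 then deriv C else deriv (deriv C))"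
  have "DERIV (df m) t :> df (Suc m) t" if "m < 2" for m t
    using that diff1[of t] diff2[of t] less_2_cases
    by (auto simp: df_def DERIV_deriv_iff_real_differentiable)
  then obtain t where "C y = (\<Sum>m<2. df m u / fact m * (y - u)^m) + df 2 t / fact 2 * (y - u)^2"
    using Taylor[of 2 df C "min y u" "max y u" u y] False by (fastforce simp: df_def)
  then have "C y = C u + deriv C u * (y - u) + deriv (deriv C) t / 2 * (y - u)^2"
    by (simp add: df_def numeral_2_eq_2)
  also have "\<dots> \<le> C u + deriv C u * (y - u) + b / 2 * (y - u)^2"
    using bound[of t] by (intro add_left_mono mult_right_mono divide_right_mono) auto
  finally show ?thesis .
qed

lemma interpolation_cost_le:
  fixes C :: "real \<Rightarrow> real"
  assumes diff1: "\<And>x. C differentiable (at x)"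
    and diff2: "\<And>x. deriv C differentiable (at x)"
    and bound: "\<And>x. deriv (deriv C) x \<le> b"
    and f0: "f0 < f1" and f: "f0 \<le> f" "f \<le> f1"
  defines "l \<equiv> (f1 - f) / (f1 - f0)"
  shows "l * C (w - f0) + (1 - l) * C (w - f1) \<le> C (w - f) + max 0 (b / 8 * (f1 - f0)^2)"
proof -
  let ?u = "w - f"
  have l: "0 \<le> l" "l \<le> 1" "1 - l = (f - f0) / (f1 - f0)"
    using f f0 by (auto simp: l_def field_simps)
  have first_order: "l * (f - f0) + (1 - l) * (f - f1) = 0"
    using f0 by (simp add: l_def field_simps)
  have "l * (f - f0)^2 + (1 - l) * (f - f1)^2
      = ((f1 - f) * (f - f0)^2 + (f - f0) * (f1 - f)^2) / (f1 - f0)"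
    unfolding l(3) by (simp add: l_def add_divide_distrib power2_commute)
  also have "(f1 - f) * (f - f0)^2 + (f - f0) * (f1 - f)^2 = (f - f0) * (f1 - f) * (f1 - f0)"
    by (simp add: power2_eq_square algebra_simps)
  finally have second_order: "l * (f - f0)^2 + (1 - l) * (f - f1)^2 = (f - f0) * (f1 - f)"
    using f0 by simp
  have "l * C (w - f0) + (1 - l) * C (w - f1)
      \<le> l * (C ?u + deriv C ?u * (f - f0) + b / 2 * (f - f0)^2)
        + (1 - l) * (C ?u + deriv C ?u * (f - f1) + b / 2 * (f - f1)^2)"
    using taylor_upper_bound[OF diff1 diff2 bound, of "w - f0" ?u]
      taylor_upper_bound[OF diff1 diff2 bound, of "w - f1" ?u] l
    by (intro add_mono mult_left_mono) auto
  also have "\<dots> = C ?u + deriv C ?u * (l * (f - f0) + (1 - l) * (f - f1))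
      + b / 2 * (l * (f - f0)^2 + (1 - l) * (f - f1)^2)"
    by (simp add: field_simps)
  also have "\<dots> = C ?u + b / 2 * ((f - f0) * (f1 - f))"
    unfolding first_order second_order by simp
  also have "\<dots> \<le> C ?u + max 0 (b / 8 * (f1 - f0)^2)"
  proof (cases "b \<ge> 0")
    case True
    have "4 * ((f - f0) * (f1 - f)) \<le> (f1 - f0)^2"
      using zero_le_power2[of "f0 + f1 - 2 * f"] by (simp add: power2_eq_square algebra_simps)
    with True have "b / 8 * (4 * ((f - f0) * (f1 - f))) \<le> b / 8 * (f1 - f0)^2"
      by (intro mult_left_mono) auto
    then show ?thesis by simp
  next
    case False
    with f have "b / 2 * ((f - f0) * (f1 - f)) \<le> 0"
      by (simp add: mult_nonpos_nonneg)
    then show ?thesis by simp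
  qed
  finally show ?thesis .
qed

lemma mono_on_nonneg_cost:
  fixes C :: "real \<Rightarrow> real"
  assumes "mono_on {0..} C \<or> antimono_on {0..} C" "C 0 = 0" "\<And>x. C x \<ge> 0"
  shows "mono_on {0..} C"
  using assms(1)
proof
  assume "antimono_on {0..} C"
  then have "C x = 0" if "x \<ge> 0" for x
    using that assms(2) assms(3)[of x] monotone_onD[of "{0..}" "(\<le>)" "\<lambda>x y. y \<le> x" C 0 x] by simp
  then show "mono_on {0..} C" by (intro mono_onI) simp
qed

lemma antimono_on_nonpos_cost:
  fixes C :: "real \<Rightarrow> real"
  assumes "mono_on {..0} C \<or> antimono_on {..0} C" "C 0 = 0" "\<And>x. C x \<ge> 0"
  shows "antimono_on {..0} C"
  using assms(1)
proof
  assume "mono_on {..0} C"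
  then have "C x = 0" if "x \<le> 0" for x
    using that assms(2) assms(3)[of x] mono_onD[of "{..0}" C x 0] by simp
  then show "antimono_on {..0} C" by (intro monotone_onI) simp
qed

definition grid_gap_cost :: "real \<Rightarrow> real list \<Rightarrow> real" where
  "grid_gap_cost b fs = Max (insert 0 {b / 8 * (fs ! (j + 1) - fs ! j)^2 | j. j + 1 < length fs})"

definition clamp_cost :: "(real \<Rightarrow> real) \<Rightarrow> real list \<Rightarrow> real \<Rightarrow> real" where
  "clamp_cost C fs \<omega> =
     (if \<omega> \<le> hd fs then C (\<omega> - hd fs) else if \<omega> \<ge> last fs then C (\<omega> - last fs) else 0)"

lemma grid_gap_cost_ge:
  "grid_gap_cost b fs \<ge> 0"
  "j + 1 < length fs \<Longrightarrow> grid_gap_cost b fs \<ge> b / 8 * (fs ! (j + 1) - fs ! j)^2"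
proof -
  have fin: "finite {b / 8 * (fs ! (j + 1) - fs ! j)^2 | j. j + 1 < length fs}"
    by (rule finite_image_set, rule finite_subset[of _ "{..<length fs}"]) auto
  then show "grid_gap_cost b fs \<ge> 0"
    unfolding grid_gap_cost_def by simp
  show "j + 1 < length fs \<Longrightarrow> grid_gap_cost b fs \<ge> b / 8 * (fs ! (j + 1) - fs ! j)^2"
    unfolding grid_gap_cost_def using fin by (intro Max_ge) auto
qed

lemma clamp_cost_nonneg: "(\<And>x. C x \<ge> 0) \<Longrightarrow> clamp_cost C fs \<omega> \<ge> 0"
  by (simp add: clamp_cost_def)

lemma clamp_below:
  assumes "mono_on {0..} C" "\<And>x. C x \<ge> 0" "f < hd fs"
  shows "C (\<omega> - hd fs) \<le> C (\<omega> - f) + clamp_cost C fs \<omega>"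
proof (cases "\<omega> \<le> hd fs")
  case True
  then show ?thesis using assms(2)[of "\<omega> - f"] by (simp add: clamp_cost_def)
next
  case False
  then have "C (\<omega> - hd fs) \<le> C (\<omega> - f)"
    using assms(1,3) by (intro mono_onD[of "{0..}" C]) auto
  then show ?thesis using clamp_cost_nonneg[of C fs \<omega>, OF assms(2)] by linarith
qed

lemma clamp_above:
  assumes "antimono_on {..0} C" "\<And>x. C x \<ge> 0" "last fs < f" "hd fs \<le> last fs"
  shows "C (\<omega> - last fs) \<le> C (\<omega> - f) + clamp_cost C fs \<omega>"
proof (cases "\<omega> \<ge> last fs")
  case True
  have "hd fs = last fs" if "\<omega> \<le> hd fs"
    using that True assms(4) by linarith
  with True have "clamp_cost C fs \<omega> = C (\<omega> - last fs)"
    by (auto simp: clamp_cost_def)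
  then show ?thesis using assms(2)[of "\<omega> - f"] by simp
next
  case False
  then have "C (\<omega> - last fs) \<le> C (\<omega> - f)"
    using assms(1,3) monotone_onD[of "{..0}" "(\<le>)" "\<lambda>x y. y \<le> x" C "\<omega> - f" "\<omega> - last fs"] by simp
  then show ?thesis using clamp_cost_nonneg[of C fs \<omega>, OF assms(2)] by linarith
qed

lemma list_bracket:
  fixes xs :: "'a::linorder list"
  assumes "xs \<noteq> []" "hd xs \<le> f" "f \<le> last xs"
  shows "f \<in> set xs \<or> (\<exists>j. j + 1 < length xs \<and> xs ! j \<le> f \<and> f \<le> xs ! (j + 1))"
  using assms
proof (induction xs)
  case Nil
  then show ?case by simp
next
  case (Cons x ys)
  show ?case
  proof (cases "ys = []")
    case True
    with Cons.prems show ?thesis by simp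
  next
    case ys: False
    show ?thesis
    proof (cases "f \<le> hd ys")
      case True
      with ys Cons.prems have "0 + 1 < length (x # ys) \<and> (x # ys) ! 0 \<le> f \<and> f \<le> (x # ys) ! (0 + 1)"
        by (auto simp: hd_conv_nth)
      then show ?thesis by blast
    next
      case False
      with ys Cons have "f \<in> set ys \<or> (\<exists>j. j + 1 < length ys \<and> ys ! j \<le> f \<and> f \<le> ys ! (j + 1))"
        by auto
      then show ?thesis
        by (metis Suc_eq_plus1 list.set_intros(2) nth_Cons_Suc length_Cons Suc_less_eq)
    qed
  qed
qed

lemma sorted_hd_le_last: "sorted_wrt (<) xs \<Longrightarrow> xs \<noteq> [] \<Longrightarrow> hd xs \<le> (last xs :: 'a::linorder)"
  by (cases xs) (auto, metis last_in_set less_le_not_le)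

lemma rounding_between_neighbours:
  fixes C :: "real \<Rightarrow> real" and fs :: "real list"
  assumes diff1: "\<And>x. C differentiable (at x)"
    and diff2: "\<And>x. deriv C differentiable (at x)"
    and bound: "\<And>x. deriv (deriv C) x \<le> b"
    and fs_sorted: "sorted_wrt (<) fs"
    and j: "j + 1 < length fs" "fs ! j \<le> f" "f \<le> fs ! (j + 1)"
  shows "\<exists>l. 0 \<le> l \<and> l \<le> 1 \<and> (\<forall>\<omega>.
           l * C (\<omega> - fs ! j) + (1 - l) * C (\<omega> - fs ! (j + 1)) \<le> C (\<omega> - f) + grid_gap_cost b fs)"
proof -
  have lt: "fs ! j < fs ! (j + 1)"
    using fs_sorted j(1) by (simp add: sorted_wrt_nth_less)
  define l where "l = (fs ! (j + 1) - f) / (fs ! (j + 1) - fs ! j)"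
  have "0 \<le> l" "l \<le> 1" using j lt by (auto simp: l_def field_simps)
  moreover have "l * C (\<omega> - fs ! j) + (1 - l) * C (\<omega> - fs ! (j + 1)) \<le> C (\<omega> - f) + grid_gap_cost b fs"
    for \<omega>
    using interpolation_cost_le[OF diff1 diff2 bound lt j(2,3), of \<omega>]
      grid_gap_cost_ge(1)[of b fs] grid_gap_cost_ge(2)[OF j(1), of b]
    unfolding l_def by linarith
  ultimately show ?thesis by blast
qed

lemma rounding_to_grid:
  fixes C :: "real \<Rightarrow> real" and fs :: "real list"
  assumes diff1: "\<And>x. C differentiable (at x)"
    and diff2: "\<And>x. deriv C differentiable (at x)"
    and bound: "\<And>x. deriv (deriv C) x \<le> b"
    and nonneg: "\<And>x. C x \<ge> 0"
    and C0: "C 0 = 0"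
    and mono_pos: "mono_on {0..} C \<or> antimono_on {0..} C"
    and mono_neg: "mono_on {..0} C \<or> antimono_on {..0} C"
    and fs_ne: "fs \<noteq> []"
    and fs_sorted: "sorted_wrt (<) fs"
  shows "\<exists>g1 g2 l. g1 \<in> set fs \<and> g2 \<in> set fs \<and> 0 \<le> l \<and> l \<le> 1 \<and> (\<forall>\<omega>.
           l * C (\<omega> - g1) + (1 - l) * C (\<omega> - g2) \<le> C (\<omega> - f) + grid_gap_cost b fs + clamp_cost C fs \<omega>)"
proof -
  have K0: "grid_gap_cost b fs \<ge> 0" and M0: "\<And>\<omega>. clamp_cost C fs \<omega> \<ge> 0"
    using grid_gap_cost_ge clamp_cost_nonneg nonneg by blast+
  consider "f < hd fs" | "last fs < f" | "hd fs \<le> f" "f \<le> last fs" by linarith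
  then show ?thesis
  proof cases
    case 1
    have "C (\<omega> - hd fs) \<le> C (\<omega> - f) + grid_gap_cost b fs + clamp_cost C fs \<omega>" for \<omega>
      using clamp_below[OF mono_on_nonneg_cost[OF mono_pos C0 nonneg] nonneg 1, of \<omega>] K0 by linarith
    with fs_ne show ?thesis
      by (intro exI[of _ "hd fs"] exI[of _ "hd fs"] exI[of _ 1]) auto
  next
    case 2
    have "C (\<omega> - last fs) \<le> C (\<omega> - f) + grid_gap_cost b fs + clamp_cost C fs \<omega>" for \<omega>
      using clamp_above[OF antimono_on_nonpos_cost[OF mono_neg C0 nonneg] nonneg 2
          sorted_hd_le_last[OF fs_sorted fs_ne], of \<omega>] K0 by linarith
    with fs_ne show ?thesis
      by (intro exI[of _ "last fs"] exI[of _ "last fs"] exI[of _ 1]) auto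
  next
    case 3
    with list_bracket[OF fs_ne] consider "f \<in> set fs"
      | j where "j + 1 < length fs" "fs ! j \<le> f" "f \<le> fs ! (j + 1)" by blast
    then show ?thesis
    proof cases
      case 1
      with K0 M0 show ?thesis by (intro exI[of _ f] exI[of _ f] exI[of _ 1]) auto
    next
      case (2 j)
      then obtain l where "0 \<le> l" "l \<le> 1" and l: "\<And>\<omega>.
          l * C (\<omega> - fs ! j) + (1 - l) * C (\<omega> - fs ! (j + 1)) \<le> C (\<omega> - f) + grid_gap_cost b fs"
        using rounding_between_neighbours[OF diff1 diff2 bound fs_sorted] by blast
      moreover have "l * C (\<omega> - fs ! j) + (1 - l) * C (\<omega> - fs ! (j + 1))
          \<le> C (\<omega> - f) + grid_gap_cost b fs + clamp_cost C fs \<omega>" for \<omega>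
        using l[of \<omega>] M0[of \<omega>] by linarith
      moreover have "fs ! j \<in> set fs" "fs ! (j + 1) \<in> set fs" using 2(1) by auto
      ultimately show ?thesis by blast
    qed
  qed
qed

section \<open>Splitting the outcomes of an algorithm\<close>

definition split_alg :: "(real \<Rightarrow> real) \<Rightarrow> (real \<Rightarrow> real) \<Rightarrow> (real \<Rightarrow> real) \<Rightarrow> qalg \<Rightarrow> qalg" where
  "split_alg L G1 G2 Q =
     (let m = n_outcomes Q; e = estimate Q in
      Q\<lparr>n_outcomes := m + m,
        povm_el := \<lambda>a i j. if a < m then complex_of_real (L (e a)) * povm_el Q a i j
                          else complex_of_real (1 - L (e (a - m))) * povm_el Q (a - m) i j,
        estimate := \<lambda>a. if a < m then G1 (e a) else G2 (e (a - m))\<rparr>)"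

lemma sum_lessThan_add:
  fixes m n :: nat
  shows "(\<Sum>a<m + n. f a) = (\<Sum>a<m. f a) + (\<Sum>a<n. f (a + m) :: 'a::comm_monoid_add)"
  by (induction n) (simp_all add: add_ac)

lemma split_alg_simps [simp]:
  "anc_dim (split_alg L G1 G2 Q) = anc_dim Q"
  "init_state (split_alg L G1 G2 Q) = init_state Q"
  "unitaries (split_alg L G1 G2 Q) = unitaries Q"
  "n_outcomes (split_alg L G1 G2 Q) = n_outcomes Q + n_outcomes Q"
  "estimate (split_alg L G1 G2 Q) a =
     (if a < n_outcomes Q then G1 (estimate Q a) else G2 (estimate Q (a - n_outcomes Q)))"
  by (simp_all add: split_alg_def Let_def)

lemma alg_dim_split_alg [simp]: "alg_dim N (split_alg L G1 G2 Q) = alg_dim N Q"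
  by (simp add: alg_dim_def)

lemma final_state_split_alg [simp]: "final_state N (split_alg L G1 G2 Q) = final_state N Q"
  by (rule ext) (simp add: final_state_def)

lemma mtrace_scale:
  "mtrace D (mmul D (\<lambda>i j. complex_of_real c * P i j) R) = complex_of_real c * mtrace D (mmul D P R)"
  by (simp add: mtrace_def mmul_def sum_distrib_left mult_ac)

lemma outcome_prob_split_alg:
  "a < n_outcomes Q \<Longrightarrow>
     outcome_prob N (split_alg L G1 G2 Q) a \<omega> = L (estimate Q a) * outcome_prob N Q a \<omega>"
  "outcome_prob N (split_alg L G1 G2 Q) (a + n_outcomes Q) \<omega>
     = (1 - L (estimate Q a)) * outcome_prob N Q a \<omega>"
  unfolding outcome_prob_def alg_dim_split_alg final_state_split_alg
  by (simp_all add: split_alg_def mtrace_scale Let_def del: of_real_diff)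

lemma valid_alg_split_alg:
  assumes Q: "valid_alg N tf F Q"
    and L: "\<And>f. 0 \<le> L f" "\<And>f. L f \<le> 1"
    and G: "\<And>f. G1 f \<in> F'" "\<And>f. G2 f \<in> F'"
  shows "valid_alg N tf F' (split_alg L G1 G2 Q)"
proof -
  let ?m = "n_outcomes Q" and ?D = "alg_dim N Q" and ?P' = "povm_el (split_alg L G1 G2 Q)"
  have P: "\<And>a. a < ?m \<Longrightarrow> psd ?D (povm_el Q a)"
    and sum_P: "mat_eq ?D (\<lambda>i j. \<Sum>a<?m. povm_el Q a i j) idm"
    using Q unfolding valid_alg_def povm_def by blast+
  have "(\<Sum>a<?m + ?m. ?P' a i j)
      = (\<Sum>a<?m. complex_of_real (L (estimate Q a)) * povm_el Q a i j
               + complex_of_real (1 - L (estimate Q a)) * povm_el Q a i j)" for i j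
    unfolding sum_lessThan_add by (simp add: split_alg_def Let_def sum.distrib)
  also have "\<dots> i j = (\<Sum>a<?m. povm_el Q a i j)" for i j
    by (simp add: algebra_simps)
  finally have "mat_eq ?D (\<lambda>i j. \<Sum>a<?m + ?m. ?P' a i j) idm"
    using sum_P by simp
  moreover have "psd ?D (?P' a)" if "a < ?m + ?m" for a
  proof (cases "a < ?m")
    case True
    then show ?thesis using P L by (simp add: split_alg_def Let_def psd_scale)
  next
    case False
    with that have "a - ?m < ?m" by simp
    then show ?thesis using P L False
      by (simp add: split_alg_def Let_def psd_scale del: of_real_diff)
  qed
  ultimately show ?thesis
    using Q G unfolding valid_alg_def povm_def by simp
qed

lemma ennreal_split_weight_le:
  fixes c1 c2 c r l q p :: real
  assumes "0 \<le> l" "l \<le> 1" "0 \<le> c1" "0 \<le> c2" "0 \<le> c" "0 \<le> r" "0 \<le> q" "0 \<le> p"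
    and "l * c1 + (1 - l) * c2 \<le> c + r"
  shows "ennreal (c1 * (l * q) * p) + ennreal (c2 * ((1 - l) * q) * p)
       \<le> ennreal (c * q * p) + ennreal (r * p * q)"
proof -
  have "ennreal (c1 * (l * q) * p) + ennreal (c2 * ((1 - l) * q) * p)
      = ennreal ((l * c1 + (1 - l) * c2) * (q * p))"
  proof -
    have "0 \<le> c1 * (l * q) * p" "0 \<le> c2 * ((1 - l) * q) * p"
      using assms(1-4,7,8) by simp_all
    then show ?thesis by (subst ennreal_plus[symmetric]) (simp_all add: algebra_simps)
  qed
  also have "\<dots> \<le> ennreal ((c + r) * (q * p))"
    using assms(7-9) by (intro ennreal_leI mult_right_mono) auto
  also have "\<dots> = ennreal (c * q * p) + ennreal (r * p * q)"
    using assms(5-8) by (subst ennreal_plus[symmetric]) (simp_all add: algebra_simps)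
  finally show ?thesis .
qed

lemma sum_nn_integral_outcome_prob:
  assumes Q: "valid_alg N tf F Q"
    and h: "h \<in> borel_measurable borel" "\<And>\<omega>. h \<omega> \<ge> 0"
  shows "(\<Sum>a<n_outcomes Q. \<integral>\<^sup>+ \<omega>. ennreal (h \<omega> * outcome_prob N Q a \<omega>) \<partial>lborel)
       = (\<integral>\<^sup>+ \<omega>. ennreal (h \<omega>) \<partial>lborel)"
proof -
  have "(\<Sum>a<n_outcomes Q. \<integral>\<^sup>+ \<omega>. ennreal (h \<omega> * outcome_prob N Q a \<omega>) \<partial>lborel)
      = (\<integral>\<^sup>+ \<omega>. (\<Sum>a<n_outcomes Q. ennreal (h \<omega> * outcome_prob N Q a \<omega>)) \<partial>lborel)"
    using h(1)
    by (intro nn_integral_sum[symmetric])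
      (auto intro!: measurable_compose[OF _ measurable_ennreal] borel_measurable_times
        borel_measurable_outcome_prob)
  also have "\<dots> = (\<integral>\<^sup>+ \<omega>. ennreal (\<Sum>a<n_outcomes Q. h \<omega> * outcome_prob N Q a \<omega>) \<partial>lborel)"
    using outcome_prob_nonneg[OF Q] h(2) by (intro nn_integral_cong sum_ennreal) auto
  also have "\<dots> = (\<integral>\<^sup>+ \<omega>. ennreal (h \<omega>) \<partial>lborel)"
    by (simp add: sum_distrib_left[symmetric] sum_outcome_prob[OF Q])
  finally show ?thesis .
qed

lemma expected_cost_split_alg_le:
  assumes Q: "valid_alg N tf F Q"
    and L: "\<And>f. 0 \<le> L f" "\<And>f. L f \<le> 1"
    and C: "C \<in> borel_measurable borel" "\<And>x. C x \<ge> 0"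
    and p: "p \<in> borel_measurable borel" "\<And>\<omega>. p \<omega> \<ge> 0"
    and R: "R \<in> borel_measurable borel" "\<And>\<omega>. R \<omega> \<ge> 0"
    and rounding: "\<And>f \<omega>. L f * C (\<omega> - G1 f) + (1 - L f) * C (\<omega> - G2 f) \<le> C (\<omega> - f) + R \<omega>"
  shows "expected_cost N C p (split_alg L G1 G2 Q)
       \<le> expected_cost N C p Q + (\<integral>\<^sup>+ \<omega>. ennreal (R \<omega> * p \<omega>) \<partial>lborel)"
proof -
  let ?m = "n_outcomes Q" and ?e = "estimate Q" and ?q = "outcome_prob N Q"
  note [measurable] = C(1) p(1) R(1)
  have "expected_cost N C p (split_alg L G1 G2 Q)
      = (\<Sum>a<?m. \<integral>\<^sup>+ \<omega>. ennreal (C (\<omega> - G1 (?e a)) * (L (?e a) * ?q a \<omega>) * p \<omega>) \<partial>lborel)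
      + (\<Sum>a<?m. \<integral>\<^sup>+ \<omega>. ennreal (C (\<omega> - G2 (?e a)) * ((1 - L (?e a)) * ?q a \<omega>) * p \<omega>) \<partial>lborel)"
    unfolding expected_cost_def
    by (simp add: sum_lessThan_add outcome_prob_split_alg)
  also have "\<dots> = (\<Sum>a<?m. \<integral>\<^sup>+ \<omega>. ennreal (C (\<omega> - G1 (?e a)) * (L (?e a) * ?q a \<omega>) * p \<omega>)
      + ennreal (C (\<omega> - G2 (?e a)) * ((1 - L (?e a)) * ?q a \<omega>) * p \<omega>) \<partial>lborel)"
    by (simp add: sum.distrib[symmetric] nn_integral_add)
  also have "\<dots> \<le> (\<Sum>a<?m. \<integral>\<^sup>+ \<omega>. ennreal (C (\<omega> - ?e a) * ?q a \<omega> * p \<omega>)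
      + ennreal (R \<omega> * p \<omega> * ?q a \<omega>) \<partial>lborel)"
    using rounding L C(2) p(2) R(2) outcome_prob_nonneg[OF Q]
    by (intro sum_mono nn_integral_mono ennreal_split_weight_le) auto
  also have "\<dots> = expected_cost N C p Q
      + (\<Sum>a<?m. \<integral>\<^sup>+ \<omega>. ennreal (R \<omega> * p \<omega> * ?q a \<omega>) \<partial>lborel)"
    unfolding expected_cost_def by (simp add: sum.distrib nn_integral_add)
  also have "(\<Sum>a<?m. \<integral>\<^sup>+ \<omega>. ennreal (R \<omega> * p \<omega> * ?q a \<omega>) \<partial>lborel)
      = (\<integral>\<^sup>+ \<omega>. ennreal (R \<omega> * p \<omega>) \<partial>lborel)"
    using R(2) p(2) by (intro sum_nn_integral_outcome_prob[OF Q]) auto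
  finally show ?thesis .
qed

lemma S_C_le_plus:
  assumes "\<And>Q. valid_alg N tf G Q \<Longrightarrow> S_C N tf C p F \<le> expected_cost N C p Q + c"
  shows "S_C N tf C p F \<le> S_C N tf C p G + c"
proof (cases "c = top")
  case False
  have "S_C N tf C p F - c \<le> expected_cost N C p Q" if "valid_alg N tf G Q" for Q
    using assms[OF that] False by (simp add: ennreal_minus_le_iff add.commute)
  then have "S_C N tf C p F - c \<le> S_C N tf C p G"
    unfolding S_C_def[of _ _ _ _ G] by (auto intro: INF_greatest)
  with False show ?thesis by (simp add: ennreal_minus_le_iff add.commute)
qed simp

lemma nn_integral_density_add_const:
  assumes "prob_density p" "M \<in> borel_measurable borel" "K \<ge> 0" "\<And>\<omega>. M \<omega> \<ge> 0"
  shows "(\<integral>\<^sup>+ \<omega>. ennreal ((K + M \<omega>) * p \<omega>) \<partial>lborel) = ennreal K + (\<integral>\<^sup>+ \<omega>. ennreal (M \<omega> * p \<omega>) \<partial>lborel)"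
proof -
  have [measurable]: "p \<in> borel_measurable borel" "M \<in> borel_measurable borel"
    using assms by (simp_all add: prob_density_def)
  have "(\<integral>\<^sup>+ \<omega>. ennreal ((K + M \<omega>) * p \<omega>) \<partial>lborel)
      = (\<integral>\<^sup>+ \<omega>. ennreal K * ennreal (p \<omega>) + ennreal (M \<omega> * p \<omega>) \<partial>lborel)"
    using assms by (intro nn_integral_cong) (simp add: distrib_right ennreal_mult prob_density_def)
  also have "\<dots> = ennreal K * (\<integral>\<^sup>+ \<omega>. ennreal (p \<omega>) \<partial>lborel) + (\<integral>\<^sup>+ \<omega>. ennreal (M \<omega> * p \<omega>) \<partial>lborel)"
    by (simp add: nn_integral_add nn_integral_cmult)
  finally show ?thesis using assms(1) by (simp add: prob_density_def)
qed

theorem theorem3: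
  fixes N tf :: nat and C p :: "real \<Rightarrow> real" and b :: real and fs :: "real list"
  assumes diff1: "\<And>x. C differentiable (at x)"
    and diff2: "\<And>x. deriv C differentiable (at x)"
    and bound: "\<And>x. deriv (deriv C) x \<le> b"
    and nonneg: "\<And>x. C x \<ge> 0"
    and C0: "C 0 = 0"
    and mono_pos: "mono_on {0..} C \<or> antimono_on {0..} C"
    and mono_neg: "mono_on {..0} C \<or> antimono_on {..0} C"
    and dens: "prob_density p"
    and fs_ne: "fs \<noteq> []"
    and fs_sorted: "sorted_wrt (<) fs"
  defines "M \<equiv> (\<lambda>\<omega>. if \<omega> \<le> hd fs then C (\<omega> - hd fs)
                 else if \<omega> \<ge> last fs then C (\<omega> - last fs) else 0)"
  shows "S_C N tf C p (set fs) \<le>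
           S_C N tf C p UNIV
           + ennreal (Max (insert 0 {b / 8 * (fs ! (j + 1) - fs ! j)^2 | j. j + 1 < length fs}))
           + (\<integral>\<^sup>+ \<omega>. ennreal (M \<omega> * p \<omega>) \<partial>lborel)"
proof -
  let ?K = "grid_gap_cost b fs"
  have M: "M = clamp_cost C fs" unfolding M_def clamp_cost_def ..
  obtain G1 G2 L where G: "\<And>f. G1 f \<in> set fs" "\<And>f. G2 f \<in> set fs"
    and L: "\<And>f. 0 \<le> L f" "\<And>f. L f \<le> 1"
    and rounding: "\<And>f \<omega>. L f * C (\<omega> - G1 f) + (1 - L f) * C (\<omega> - G2 f) \<le> C (\<omega> - f) + (?K + M \<omega>)"
    using rounding_to_grid[OF diff1 diff2 bound nonneg C0 mono_pos mono_neg fs_ne fs_sorted]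
    unfolding M add.assoc by metis
  have "C \<in> borel_measurable borel"
    using diff1 by (intro borel_measurable_continuous_onI continuous_at_imp_continuous_on)
      (simp add: differentiable_imp_continuous_within)
  then have [measurable]: "C \<in> borel_measurable borel" "M \<in> borel_measurable borel"
    unfolding M clamp_cost_def by measurable
  have K0: "?K \<ge> 0" and M0: "\<And>\<omega>. M \<omega> \<ge> 0"
    using grid_gap_cost_ge clamp_cost_nonneg nonneg unfolding M by blast+
  have "S_C N tf C p (set fs) \<le> S_C N tf C p UNIV + (\<integral>\<^sup>+ \<omega>. ennreal ((?K + M \<omega>) * p \<omega>) \<partial>lborel)"
    (is "_ \<le> _ + ?cost")
  proof (rule S_C_le_plus)
    fix Q assume Q: "valid_alg N tf UNIV Q"
    have "S_C N tf C p (set fs) \<le> expected_cost N C p (split_alg L G1 G2 Q)"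
      unfolding S_C_def using valid_alg_split_alg[OF Q L G] by (auto intro: INF_lower)
    also have "\<dots> \<le> expected_cost N C p Q + ?cost"
      using dens K0 M0 nonneg
      by (intro expected_cost_split_alg_le[OF Q L _ _ _ _ _ _ rounding]) (auto simp: prob_density_def)
    finally show "S_C N tf C p (set fs) \<le> expected_cost N C p Q + ?cost" .
  qed
  also have "?cost = ennreal ?K + (\<integral>\<^sup>+ \<omega>. ennreal (M \<omega> * p \<omega>) \<partial>lborel)"
    by (rule nn_integral_density_add_const[OF dens _ K0 M0]) measurable
  finally show ?thesis
    by (simp add: grid_gap_cost_def add.assoc)
qed

end
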